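(* Let $\nu$ be an ergodic $S$-invariant probability measure on $X_\eta$ different from the Dirac measure at the all-zero sequence. Then there exist integers $b'_k$, $k\ge1$, with $1<b'_k\mid b_k$ for all $k$ and $\sum_{k\ge1}1/b'_k<\infty$, such that the discrete spectrum of $(S,X_\eta,\nu)$ contains all $b'_1\cdots b'_k$-th roots of unity for every $k\ge1$.
   Context: Let $S$ be the shift on $\{0,1\}^{\mathbb Z}$, $(Sx)(n)=x(n+1)$. Let $\mathscr{B}=\{b_1,b_2,\dots\}\subset\{2,3,\dots\}$ with $\gcd(b_i,b_j)=1$ for $i\ne j$ and $\sum_i1/b_i<\infty$. Define $\eta(n)=1$ iff $b_i\nmid n$ for all $i$ (else $0$), and let $X_\eta$ be the set of $y\in\{0,1\}^{\mathbb Z}$ all of whose finite blocks occur in $\eta$. The discrete spectrum of $(S,X_\eta,\nu)$ is the set of eigenvalues $\lambda$ ($f\circ S=\lambda f$ for some nonzero $f\in L^2(\nu)$). *)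

theory Defs
  imports "HOL-Probability.Probability"
begin

text \<open>The full shift on two symbols, points are functions int => bool
  (True stands for 1, False for 0), with the product sigma algebra
  (which is the Borel sigma algebra of the product topology).\<close>

definition shiftM :: "(int \<Rightarrow> bool) measure" where
  "shiftM = (\<Pi>\<^sub>M n\<in>(UNIV::int set). count_space (UNIV::bool set))"

definition shift :: "(int \<Rightarrow> bool) \<Rightarrow> (int \<Rightarrow> bool)" where
  "shift x = (\<lambda>n. x (n + 1))"

definition eta :: "(nat \<Rightarrow> nat) \<Rightarrow> int \<Rightarrow> bool" where
  "eta b n \<longleftrightarrow> (\<forall>i. \<not> (int (b i) dvd n))"

definition X_eta :: "(nat \<Rightarrow> nat) \<Rightarrow> (int \<Rightarrow> bool) set" where
  "X_eta b = {y. \<forall>m (len::nat). \<exists>t. \<forall>j<len. y (m + int j) = eta b (t + int j)}"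

definition shift_invariant :: "(int \<Rightarrow> bool) measure \<Rightarrow> bool" where
  "shift_invariant \<nu> \<longleftrightarrow> shift \<in> measurable \<nu> \<nu> \<and> distr \<nu> \<nu> shift = \<nu>"

definition shift_ergodic :: "(int \<Rightarrow> bool) measure \<Rightarrow> bool" where
  "shift_ergodic \<nu> \<longleftrightarrow>
     (\<forall>A\<in>sets \<nu>. shift -` A \<inter> space \<nu> = A \<longrightarrow> measure \<nu> A = 0 \<or> measure \<nu> A = 1)"

text \<open>Discrete spectrum: eigenvalues of the Koopman operator on L^2(nu).\<close>
definition discrete_spectrum :: "(int \<Rightarrow> bool) measure \<Rightarrow> complex set" where
  "discrete_spectrum \<nu> = {c. \<exists>f :: (int \<Rightarrow> bool) \<Rightarrow> complex.
      f \<in> borel_measurable \<nu> \<and> integrable \<nu> (\<lambda>x. (cmod (f x))\<^sup>2) \<and>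
      \<not> (AE x in \<nu>. f x = 0) \<and>
      (AE x in \<nu>. f (shift x) = c * f x)}"

end

theory Submission
  imports Defs
begin

(*
  For a point y and a modulus c let M_c(y) be the set of residues r mod c such that y vanishes
  on the whole class r + cZ.  Since eta vanishes on every multiple of b i, the set M_(b i)(y)
  is nonempty for y in X_eta, and M_c(y) is the rotation by one of M_c(shift y).  Hence the
  rotation period of M_(b i)(y) is shift invariant, so by ergodicity it equals a constant b' i
  almost surely; b' i divides b i, and b' i = 1 would force y = 0 almost surely, i.e. nu would
  be the Dirac measure at the zero sequence.

  Eigenvalues: the position s(y) of M_(b i)(y) in its rotation orbit satisfies
  s(y) = s(shift y) + 1 modulo b' i, so y |-> w^(-s(y)) is an eigenfunction for every
  (b' i)-th root of unity w.  The b' i are pairwise coprime, and a multiplicatively closed set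
  containing the roots of unity of pairwise coprime orders contains those of their products.

  Summability: by the Chinese remainder theorem a point of X_eta has at most a fraction
  prod_(i<K) (1 - 1/b' i) of ones in each block of length b 0 * ... * b (K-1); integrating, the
  positive density nu{y. y 0} is bounded by these products, which forces sum 1/b' i < infinity.
*)

lemma int_subgroup_least_generator:
  fixes H :: "int set"
  assumes diff_closed: "\<And>x y. x \<in> H \<Longrightarrow> y \<in> H \<Longrightarrow> x - y \<in> H"
    and c: "c \<in> H" "c > 0"
  shows "0 < (LEAST d::nat. 0 < d \<and> int d \<in> H)"
    and "t \<in> H \<longleftrightarrow> int (LEAST d::nat. 0 < d \<and> int d \<in> H) dvd t"
proof -
  define d where "d = (LEAST d::nat. 0 < d \<and> int d \<in> H)"
  have d: "0 < d \<and> int d \<in> H"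
    unfolding d_def by (rule LeastI[of _ "nat c"]) (use c in auto)
  then show "0 < (LEAST d::nat. 0 < d \<and> int d \<in> H)" unfolding d_def by simp
  have zero: "0 \<in> H" using diff_closed[OF c(1) c(1)] by simp
  have multiples: "k * int d \<in> H" for k
  proof (induction k rule: int_induct[where k = 0])
    case base then show ?case using zero by simp
  next
    case (step1 k)
    have "k * int d - (0 - int d) \<in> H" using diff_closed[OF step1(2) diff_closed[OF zero]] d by blast
    then show ?case by (simp add: algebra_simps)
  next
    case (step2 k)
    have "k * int d - int d \<in> H" using diff_closed[OF step2(2)] d by blast
    then show ?case by (simp add: algebra_simps)
  qed
  show "t \<in> H \<longleftrightarrow> int (LEAST d::nat. 0 < d \<and> int d \<in> H) dvd t"
    unfolding d_def[symmetric]
  proof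
    assume t: "t \<in> H"
    have "t - (t div int d) * int d \<in> H" using diff_closed[OF t multiples] .
    moreover have m: "0 \<le> t mod int d" "t mod int d < int d" using d by simp_all
    moreover define r where "r = nat (t mod int d)"
    ultimately have r: "int r \<in> H" using d by (simp add: minus_div_mult_eq_mod)
    have "r = 0"
    proof (rule ccontr)
      assume "r \<noteq> 0"
      then have "d \<le> r" unfolding d_def by (intro Least_le) (use r in auto)
      then show False using m unfolding r_def by (simp add: le_nat_iff)
    qed
    then show "int d dvd t" using m by (simp add: r_def dvd_eq_mod_eq_0)
  next
    assume "int d dvd t"
    then show "t \<in> H" using multiples by (auto elim!: dvdE simp: mult.commute)
  qed
qed

definition rot :: "int \<Rightarrow> int \<Rightarrow> int set \<Rightarrow> int set" where
  "rot c t A = (\<lambda>a. (a + t) mod c) ` A"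

lemma rot_rot: "rot c s (rot c t A) = rot c (t + s) A"
  unfolding rot_def image_image by (rule image_cong) (auto simp: mod_add_left_eq add.assoc)

lemma rot_cong: "c dvd s - t \<Longrightarrow> rot c s A = rot c t A"
  unfolding rot_def by (rule image_cong) (auto simp: mod_eq_dvd_iff)

lemma rot_0: "A \<subseteq> {0..<c} \<Longrightarrow> rot c 0 A = A"
  unfolding rot_def by (subst image_cong[of A A _ id]) auto

lemma rot_subset: "c > 0 \<Longrightarrow> rot c t A \<subseteq> {0..<c}"
  unfolding rot_def by auto

lemma rot_inverse: "A \<subseteq> {0..<c} \<Longrightarrow> rot c (- t) (rot c t A) = A"
  by (simp add: rot_rot rot_0)

definition period :: "int \<Rightarrow> int set \<Rightarrow> nat" where
  "period c A = (LEAST d::nat. 0 < d \<and> int d \<in> {t. rot c t A = A})"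

lemma rot_commute: "rot c s (rot c t A) = rot c t (rot c s A)"
  by (simp add: rot_rot add.commute)

lemma
  assumes A: "A \<subseteq> {0..<c}" and c: "c > 0"
  shows period_pos: "0 < period c A"
    and rot_eq_iff_period_dvd: "rot c t A = A \<longleftrightarrow> int (period c A) dvd t"
proof -
  have diff_closed: "x - y \<in> {t. rot c t A = A}"
    if "x \<in> {t. rot c t A = A}" "y \<in> {t. rot c t A = A}" for x y
  proof -
    have "rot c (x - y) A = rot c (- y) (rot c x A)" by (simp add: rot_rot)
    also have "\<dots> = rot c (- y) (rot c y A)" using that by simp
    finally show ?thesis using rot_inverse[OF A] by simp
  qed
  have "rot c c A = A" using rot_cong[of c c 0 A] rot_0[OF A] by simp
  then show "0 < period c A" "rot c t A = A \<longleftrightarrow> int (period c A) dvd t"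
    using int_subgroup_least_generator(1)[OF diff_closed, of c]
      int_subgroup_least_generator(2)[OF diff_closed, of c t] c
    unfolding period_def by auto
qed

lemma period_dvd: "A \<subseteq> {0..<c} \<Longrightarrow> c > 0 \<Longrightarrow> int (period c A) dvd c"
  using rot_eq_iff_period_dvd rot_cong[of c c 0 A] rot_0 by fastforce

lemma period_rot:
  assumes A: "A \<subseteq> {0..<c}" and c: "c > 0"
  shows "period c (rot c u A) = period c A"
proof -
  have "rot c t (rot c u A) = rot c u A \<longleftrightarrow> rot c t A = A" for t
  proof
    assume "rot c t (rot c u A) = rot c u A"
    then have "rot c (- u) (rot c u (rot c t A)) = rot c (- u) (rot c u A)"
      by (simp add: rot_commute)
    then show "rot c t A = A" using rot_inverse rot_subset[OF c] A by metis
  qed (metis rot_commute)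
  then show ?thesis unfolding period_def by simp
qed

lemma rot_mod_period:
  assumes "A \<subseteq> {0..<c}" "c > 0"
  shows "rot c t A = rot c (t mod int (period c A)) A"
proof -
  have "rot c (t - t mod int (period c A)) A = A"
    using assms by (simp add: rot_eq_iff_period_dvd minus_mod_eq_mult_div)
  then have "rot c (t mod int (period c A)) (rot c (t - t mod int (period c A)) A)
      = rot c (t mod int (period c A)) A" by simp
  then show ?thesis by (simp add: rot_rot)
qed

lemma rotations_cover:
  assumes A: "A \<subseteq> {0..<c}" and c: "c > 0" and ne: "A \<noteq> {}"
  shows "{0..<c} = (\<Union>t\<in>{0..<int (period c A)}. rot c t A)"
proof
  obtain a where a: "a \<in> A" using ne by blast
  show "{0..<c} \<subseteq> (\<Union>t\<in>{0..<int (period c A)}. rot c t A)"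
  proof
    fix r assume r: "r \<in> {0..<c}"
    have "r = (a + (r - a)) mod c" using r by simp
    then have "r \<in> rot c (r - a) A" unfolding rot_def using a by blast
    then have "r \<in> rot c ((r - a) mod int (period c A)) A" using rot_mod_period[OF A c] by simp
    moreover have "(r - a) mod int (period c A) \<in> {0..<int (period c A)}"
      using period_pos[OF A c] by simp
    ultimately show "r \<in> (\<Union>t\<in>{0..<int (period c A)}. rot c t A)" by blast
  qed
qed (use rot_subset[OF c] in blast)

lemma card_times_period:
  assumes A: "A \<subseteq> {0..<c}" and c: "c > 0" and ne: "A \<noteq> {}"
  shows "nat c \<le> card A * period c A"
proof -
  have "nat c = card (\<Union>t\<in>{0..<int (period c A)}. rot c t A)"
    using rotations_cover[OF assms] by (metis card_atLeastLessThan_int diff_zero)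
  also have "\<dots> \<le> (\<Sum>t\<in>{0..<int (period c A)}. card (rot c t A))" by (rule card_UN_le) simp
  also have "\<dots> \<le> (\<Sum>t\<in>{0..<int (period c A)}. card A)"
    unfolding rot_def by (intro sum_mono card_image_le) (use A finite_subset in blast)
  finally show ?thesis by (simp add: mult.commute)
qed

lemma period_one_full:
  assumes A: "A \<subseteq> {0..<c}" and c: "c > 0" and ne: "A \<noteq> {}" and p: "period c A = 1"
  shows "A = {0..<c}"
proof -
  have "{0..<int (period c A)} = {0}" using p by auto
  then show ?thesis using rotations_cover[OF A c ne] rot_0[OF A] by simp
qed

definition orbit_rep :: "int \<Rightarrow> int set \<Rightarrow> int set" where
  "orbit_rep c A = (SOME B. \<exists>t. B = rot c t A)"

definition orbit_index :: "int \<Rightarrow> int set \<Rightarrow> int" where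
  "orbit_index c A = (SOME t. A = rot c t (orbit_rep c A))"

lemma orbit_rep_in_orbit: "A \<subseteq> {0..<c} \<Longrightarrow> \<exists>t. orbit_rep c A = rot c t A"
  unfolding orbit_rep_def by (rule someI[of _ A]) (metis rot_0)

lemma orbit_rep_rot:
  assumes A: "A \<subseteq> {0..<c}"
  shows "orbit_rep c (rot c u A) = orbit_rep c A"
proof -
  have "(\<exists>t. B = rot c t (rot c u A)) \<longleftrightarrow> (\<exists>t. B = rot c t A)" for B
  proof
    assume "\<exists>t. B = rot c t A"
    then obtain t where "B = rot c t A" by blast
    then have "B = rot c (t - u) (rot c u A)" by (simp add: rot_rot)
    then show "\<exists>t. B = rot c t (rot c u A)" by blast
  qed (auto simp: rot_rot)
  then show ?thesis unfolding orbit_rep_def by simp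
qed

lemma orbit_index:
  assumes A: "A \<subseteq> {0..<c}"
  shows "A = rot c (orbit_index c A) (orbit_rep c A)"
proof -
  obtain t where "orbit_rep c A = rot c t A" using orbit_rep_in_orbit[OF A] by blast
  then have "A = rot c (- t) (orbit_rep c A)" by (simp add: rot_inverse[OF A])
  then show ?thesis unfolding orbit_index_def by (rule someI)
qed

lemma orbit_index_rot:
  assumes A: "A \<subseteq> {0..<c}" and c: "c > 0"
  shows "int (period c A) dvd orbit_index c (rot c 1 A) - orbit_index c A - 1"
proof -
  define R where "R = orbit_rep c A"
  define s where "s = orbit_index c A"
  define s' where "s' = orbit_index c (rot c 1 A)"
  have R: "R \<subseteq> {0..<c}" using orbit_rep_in_orbit[OF A] rot_subset[OF c] unfolding R_def by metis
  have A_R: "A = rot c s R" unfolding R_def s_def by (rule orbit_index[OF A])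
  have "rot c s' R = rot c 1 A"
    using orbit_index[OF rot_subset[OF c]] orbit_rep_rot[OF A] unfolding R_def s'_def by metis
  also have "\<dots> = rot c (s + 1) R" using A_R by (simp add: rot_rot)
  finally have "rot c (- (s + 1)) (rot c s' R) = R" using rot_inverse[OF R, of "s + 1"] by simp
  then have "rot c (s' - s - 1) R = R" by (simp add: rot_rot algebra_simps)
  then have "int (period c R) dvd s' - s - 1" using rot_eq_iff_period_dvd[OF R c] by blast
  moreover have "period c A = period c R" using A_R period_rot[OF R c] by simp
  ultimately show ?thesis unfolding s_def s'_def by simp
qed

lemma residue_pair_bij:
  fixes P Q :: int
  assumes P: "P > 0" and Q: "Q > 0" and cop: "coprime P Q"
  shows "bij_betw (\<lambda>n. (n mod P, n mod Q)) {0..<P * Q} ({0..<P} \<times> {0..<Q})"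
proof -
  define h where "h = (\<lambda>n. (n mod P, n mod Q))"
  have "inj_on h {0..<P * Q}"
  proof (rule inj_onI)
    fix n m assume n: "n \<in> {0..<P * Q}" and m: "m \<in> {0..<P * Q}" and "h n = h m"
    then have "P dvd n - m" "Q dvd n - m" unfolding h_def by (auto simp: mod_eq_dvd_iff)
    then have "P * Q dvd n - m" using cop by (rule divides_mult)
    then have "n mod (P * Q) = m mod (P * Q)" by (simp add: mod_eq_dvd_iff)
    then show "n = m" using n m by simp
  qed
  moreover have "h ` {0..<P * Q} \<subseteq> {0..<P} \<times> {0..<Q}" unfolding h_def using P Q by auto
  moreover have "card {0..<P * Q} = card ({0..<P} \<times> {0..<Q})"
    using P Q by (simp add: card_cartesian_product nat_mult_distrib)
  ultimately have "h ` {0..<P * Q} = {0..<P} \<times> {0..<Q}"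
    by (simp add: card_image card_subset_eq)
  then show ?thesis unfolding h_def bij_betw_def using \<open>inj_on h {0..<P * Q}\<close> h_def by simp
qed

lemma card_residue_pattern_pair:
  fixes P Q :: int
  assumes P: "P > 0" and Q: "Q > 0" and cop: "coprime P Q"
    and A: "A \<subseteq> {0..<P}" and S: "S \<subseteq> {0..<Q}"
  shows "card {n\<in>{0..<P * Q}. n mod P \<in> A \<and> n mod Q \<in> S} = card A * card S"
proof -
  define h where "h = (\<lambda>n::int. (n mod P, n mod Q))"
  have bij: "bij_betw h {0..<P * Q} ({0..<P} \<times> {0..<Q})"
    unfolding h_def by (rule residue_pair_bij[OF P Q cop])
  have "h ` {n\<in>{0..<P * Q}. h n \<in> A \<times> S} = A \<times> S"
  proof
    show "A \<times> S \<subseteq> h ` {n\<in>{0..<P * Q}. h n \<in> A \<times> S}"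
    proof
      fix x assume x: "x \<in> A \<times> S"
      then have "x \<in> h ` {0..<P * Q}" using bij_betw_imp_surj_on[OF bij] A S by auto
      then obtain n where "n \<in> {0..<P * Q}" "x = h n" by blast
      then show "x \<in> h ` {n\<in>{0..<P * Q}. h n \<in> A \<times> S}" using x by (intro image_eqI) auto
    qed
  qed auto
  then have "bij_betw h {n\<in>{0..<P * Q}. h n \<in> A \<times> S} (A \<times> S)"
    by (intro bij_betw_subset[OF bij]) auto
  then show ?thesis by (simp add: h_def bij_betw_same_card card_cartesian_product)
qed

lemma card_residue_pattern:
  fixes m :: "nat \<Rightarrow> int"
  assumes pos: "\<And>i. m i > 0" and cop: "\<And>i j. i \<noteq> j \<Longrightarrow> coprime (m i) (m j)"
    and S: "\<And>i. S i \<subseteq> {0..<m i}"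
  shows "card {n\<in>{0..<(\<Prod>i<K. m i)}. \<forall>i<K. n mod m i \<in> S i} = (\<Prod>i<K. card (S i))"
proof (induction K)
  case 0
  have "{n\<in>{0..<(\<Prod>i<0. m i)}. \<forall>i<0. n mod m i \<in> S i} = {0}" by auto
  then show ?case by simp
next
  case (Suc K)
  define P where "P = (\<Prod>i<K. m i)"
  define T where "T = {n\<in>{0..<P}. \<forall>i<K. n mod m i \<in> S i}"
  have P: "P > 0" unfolding P_def using pos by (simp add: prod_pos)
  have cop_P: "coprime P (m K)" unfolding P_def by (rule prod_coprime_left) (use cop in auto)
  have "(\<forall>i<Suc K. n mod m i \<in> S i) \<longleftrightarrow> n mod P \<in> T \<and> n mod m K \<in> S K" for n
  proof -
    have "n mod P mod m i = n mod m i" if "i < K" for i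
      using that unfolding P_def by (simp add: mod_mod_cancel dvd_prodI)
    then have "n mod P \<in> T \<longleftrightarrow> (\<forall>i<K. n mod m i \<in> S i)" unfolding T_def using P by simp
    then show ?thesis by (simp add: All_less_Suc conj_commute)
  qed
  then have "{n\<in>{0..<(\<Prod>i<Suc K. m i)}. \<forall>i<Suc K. n mod m i \<in> S i}
      = {n\<in>{0..<P * m K}. n mod P \<in> T \<and> n mod m K \<in> S K}"
    unfolding P_def by simp
  also have "card \<dots> = card T * card (S K)"
    by (rule card_residue_pattern_pair[OF P pos cop_P _ S]) (auto simp: T_def)
  finally show ?case using Suc.IH unfolding T_def P_def by simp
qed

lemma mem_rot_iff:
  assumes c: "c > 0" and B: "B \<subseteq> {0..<c}"
  shows "x \<in> rot c t B \<longleftrightarrow> x \<in> {0..<c} \<and> (x - t) mod c \<in> B"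
proof
  assume "x \<in> rot c t B"
  then obtain a where a: "a \<in> B" "x = (a + t) mod c" unfolding rot_def by blast
  then have "(x - t) mod c = a" using B by (auto simp: mod_diff_left_eq)
  then show "x \<in> {0..<c} \<and> (x - t) mod c \<in> B" using a c by simp
next
  assume x: "x \<in> {0..<c} \<and> (x - t) mod c \<in> B"
  then have "x = ((x - t) mod c + t) mod c" by (simp add: mod_add_left_eq)
  then show "x \<in> rot c t B" unfolding rot_def using x by blast
qed

definition missing_residues :: "int \<Rightarrow> (int \<Rightarrow> bool) \<Rightarrow> int set" where
  "missing_residues c y = {r\<in>{0..<c}. \<forall>n. n mod c = r \<longrightarrow> \<not> y n}"

lemma missing_residues_subset: "missing_residues c y \<subseteq> {0..<c}"
  unfolding missing_residues_def by auto

lemma missing_residues_shift: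
  assumes c: "c > 0"
  shows "missing_residues c y = rot c 1 (missing_residues c (shift y))"
proof (rule set_eqI)
  fix x
  have "(\<forall>n. n mod c = (x - 1) mod c \<longrightarrow> \<not> y (n + 1)) \<longleftrightarrow> (\<forall>m. m mod c = x mod c \<longrightarrow> \<not> y m)"
  proof
    assume h: "\<forall>n. n mod c = (x - 1) mod c \<longrightarrow> \<not> y (n + 1)"
    show "\<forall>m. m mod c = x mod c \<longrightarrow> \<not> y m"
    proof (intro allI impI)
      fix m assume "m mod c = x mod c"
      then have "(m - 1) mod c = (x - 1) mod c" by (metis mod_diff_left_eq)
      then show "\<not> y m" using h[rule_format, of "m - 1"] by simp
    qed
  next
    assume h: "\<forall>m. m mod c = x mod c \<longrightarrow> \<not> y m"
    show "\<forall>n. n mod c = (x - 1) mod c \<longrightarrow> \<not> y (n + 1)"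
    proof (intro allI impI)
      fix n assume "n mod c = (x - 1) mod c"
      then have "(n + 1) mod c = x mod c" by (metis add.commute diff_add_cancel mod_add_right_eq)
      then show "\<not> y (n + 1)" using h by blast
    qed
  qed
  then show "x \<in> missing_residues c y \<longleftrightarrow> x \<in> rot c 1 (missing_residues c (shift y))"
    unfolding mem_rot_iff[OF c missing_residues_subset]
    by (auto simp: missing_residues_def shift_def)
qed

lemma missing_residues_all:
  assumes "missing_residues c y = {0..<c}" "c > 0"
  shows "y = (\<lambda>_. False)"
proof
  fix n
  have "n mod c \<in> missing_residues c y" using assms by simp
  then show "y n = False" unfolding missing_residues_def by blast
qed

lemma X_eta_finite_window:
  assumes y: "y \<in> X_eta b" and F: "finite F"
  shows "\<exists>t. \<forall>n\<in>F. y n = eta b (t + n)"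
proof -
  define L where "L = Max (insert 0 (abs ` F))"
  have L: "\<bar>n\<bar> \<le> L" if "n \<in> F" for n unfolding L_def using F that by (intro Max_ge) auto
  obtain t where t: "\<forall>j<nat (2 * L + 1). y (- L + int j) = eta b (t + int j)"
    using y unfolding X_eta_def by blast
  have "y n = eta b (t + L + n)" if "n \<in> F" for n
  proof -
    have "nat (n + L) < nat (2 * L + 1)" "int (nat (n + L)) = n + L" using L[OF that] by auto
    then show ?thesis using t by (metis add.commute add.left_commute diff_add_cancel uminus_add_conv_diff)
  qed
  then show ?thesis by blast
qed

text \<open>The residue classes missed by a point of \<open>X_eta b\<close> include one class modulo each \<open>b i\<close>,
  because \<open>eta b\<close> vanishes on all multiples of \<open>b i\<close>.\<close>

lemma missing_residues_nonempty:
  assumes y: "y \<in> X_eta b" and b: "b i > 0"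
  shows "missing_residues (int (b i)) y \<noteq> {}"
proof
  define c where "c = int (b i)"
  assume "missing_residues c y = {}"
  then have "\<forall>r\<in>{0..<c}. \<exists>n. n mod c = r \<and> y n" unfolding missing_residues_def by auto
  then obtain f where f: "\<And>r. r \<in> {0..<c} \<Longrightarrow> f r mod c = r \<and> y (f r)" by metis
  obtain t where t: "\<forall>n\<in>f ` {0..<c}. y n = eta b (t + n)"
    using X_eta_finite_window[OF y] by blast
  define r where "r = (- t) mod c"
  have r: "r \<in> {0..<c}" unfolding r_def c_def using b by simp
  then have "eta b (t + f r)" using f t by blast
  moreover have "c dvd t + f r"
    using f[OF r] unfolding r_def by (metis add.commute mod_eq_dvd_iff diff_minus_eq_add)
  ultimately show False unfolding eta_def c_def by blast
qed

lemma card_complement_le: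
  assumes A: "A \<subseteq> {0..<c}" and c: "c > 0" and ne: "A \<noteq> {}"
  shows "real (card ({0..<c} - A)) \<le> real_of_int c * (1 - 1 / real (period c A))"
proof -
  have p: "real (period c A) > 0" using period_pos[OF A c] by simp
  have "real (nat c) \<le> real (card A * period c A)"
    using card_times_period[OF A c ne] by (simp only: of_nat_le_iff)
  then have "real_of_int c \<le> real (card A) * real (period c A)" using c by simp
  then have "real_of_int c / real (period c A) \<le> real (card A)"
    using p by (simp add: divide_le_eq)
  moreover have "real (card ({0..<c} - A)) = real_of_int c - real (card A)"
  proof -
    have "card A \<le> card {0..<c}" using A by (intro card_mono) auto
    then show ?thesis using A c by (simp add: card_Diff_subset finite_subset of_nat_diff)
  qed
  ultimately show ?thesis by (simp add: algebra_simps)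
qed

text \<open>Counting ones of a point of \<open>X_eta b\<close> in a period \<open>b 0 \<cdots> b (K-1)\<close>: by the Chinese
  remainder theorem a one can only sit at positions avoiding all missing classes, and the
  missing classes modulo \<open>b i\<close> form at least a \<open>1/period\<close>-fraction of all classes.\<close>

lemma card_ones_le:
  assumes y: "y \<in> X_eta b" and b_pos: "\<And>i. b i > 0"
    and b_coprime: "\<And>i j. i \<noteq> j \<Longrightarrow> coprime (b i) (b j)"
  shows "real (card {n\<in>{0..<(\<Prod>i<K. int (b i))}. y n})
    \<le> real_of_int (\<Prod>i<K. int (b i))
       * (\<Prod>i<K. 1 - 1 / real (period (int (b i)) (missing_residues (int (b i)) y)))"
proof -
  define N where "N = (\<Prod>i<K. int (b i))"
  define M where "M i = missing_residues (int (b i)) y" for i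
  define S where "S i = {0..<int (b i)} - M i" for i
  have "{n\<in>{0..<N}. y n} \<subseteq> {n\<in>{0..<N}. \<forall>i<K. n mod b i \<in> S i}"
    using b_pos unfolding S_def M_def missing_residues_def by auto
  moreover have "finite {n\<in>{0..<N}. \<forall>i<K. n mod b i \<in> S i}"
    by (rule finite_subset[of _ "{0..<N}"]) auto
  ultimately have "card {n\<in>{0..<N}. y n} \<le> card {n\<in>{0..<N}. \<forall>i<K. n mod b i \<in> S i}"
    by (rule card_mono[rotated])
  also have "\<dots> = (\<Prod>i<K. card (S i))"
    unfolding N_def by (rule card_residue_pattern) (use b_pos b_coprime in \<open>auto simp: S_def\<close>)
  finally have "real (card {n\<in>{0..<N}. y n}) \<le> (\<Prod>i<K. real (card (S i)))"
    by (metis of_nat_le_iff of_nat_prod)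
  also have "\<dots> \<le> (\<Prod>i<K. real_of_int (int (b i)) * (1 - 1 / real (period (int (b i)) (M i))))"
  proof (rule prod_mono)
    fix i
    have "M i \<subseteq> {0..<int (b i)}" "int (b i) > 0" "M i \<noteq> {}"
      using missing_residues_subset missing_residues_nonempty[OF y] b_pos unfolding M_def by auto
    then show "0 \<le> real (card (S i)) \<and>
      real (card (S i)) \<le> real_of_int (int (b i)) * (1 - 1 / real (period (int (b i)) (M i)))"
      unfolding S_def using card_complement_le[of "M i" "int (b i)"] by simp
  qed
  also have "\<dots> = real_of_int N * (\<Prod>i<K. 1 - 1 / real (period (int (b i)) (M i)))"
    unfolding N_def by (simp only: prod.distrib of_int_prod)
  finally show ?thesis unfolding M_def N_def .
qed


lemma power_int_root_of_unity_cong: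
  fixes w :: complex
  assumes w: "w ^ p = 1" and ab: "int p dvd a - b"
  shows "w powi a = w powi b"
proof -
  obtain k where k: "a = b + int p * k" using ab by (metis dvdE add.commute diff_add_cancel)
  have "w \<noteq> 0 \<or> p = 0" using w by (cases p) auto
  then show ?thesis
  proof
    assume "w \<noteq> 0"
    then have "w powi a = w powi b * (w powi int p) powi k"
      unfolding k by (simp add: power_int_add power_int_mult)
    then show ?thesis using w by (simp only: power_int_of_nat power_int_1_left mult_1_right)
  qed (use k in simp)
qed

text \<open>A root of unity of order \<open>a b\<close> with \<open>a, b\<close> coprime is a product of an \<open>a\<close>-th and a
  \<open>b\<close>-th root of unity (via a Bezout identity \<open>u a + v b = 1\<close>).\<close>

lemma root_of_unity_split:
  fixes z :: complex
  assumes a: "a > 0" and b: "b > 0" and cop: "coprime a b" and z: "z ^ (a * b) = 1"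
  shows "\<exists>x y. z = x * y \<and> x ^ a = 1 \<and> y ^ b = 1"
proof -
  have "gcd (int a) (int b) = 1" using cop by (simp add: coprime_iff_gcd_eq_1 gcd_int_int_eq)
  then obtain u v where uv: "u * int a + v * int b = 1" using bezout_int[of "int a" "int b"] by metis
  have z0: "z \<noteq> 0" using z a b by (auto simp: power_0_left)
  define x where "x = z powi (v * int b)"
  define y where "y = z powi (u * int a)"
  have "x * y = z powi (v * int b + u * int a)" unfolding x_def y_def using z0 by (simp add: power_int_add)
  then have "z = x * y" using uv by (simp add: add.commute)
  moreover have "x ^ a = (z ^ (a * b)) powi v"
    unfolding x_def power_int_power' power_int_power by (simp add: mult_ac)
  moreover have "y ^ b = (z ^ (a * b)) powi u"
    unfolding y_def power_int_power' power_int_power by (simp add: mult_ac)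
  ultimately show ?thesis using z by auto
qed


lemma roots_of_coprime_product:
  fixes G :: "complex set" and p :: "nat \<Rightarrow> nat"
  assumes mult: "\<And>x y. x \<in> G \<Longrightarrow> y \<in> G \<Longrightarrow> x * y \<in> G"
    and roots: "\<And>i w. w ^ p i = 1 \<Longrightarrow> w \<in> G"
    and pos: "\<And>i. p i > 0" and cop: "\<And>i j. i \<noteq> j \<Longrightarrow> coprime (p i) (p j)"
  shows "z ^ (\<Prod>i\<le>k. p i) = 1 \<Longrightarrow> z \<in> G"
proof (induction k arbitrary: z)
  case 0
  then show ?case using roots by simp
next
  case (Suc k)
  have "coprime (\<Prod>i\<le>k. p i) (p (Suc k))" by (rule prod_coprime_left) (use cop in auto)
  moreover have "(\<Prod>i\<le>k. p i) > 0" using pos by (simp add: prod_pos)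
  moreover have "z ^ ((\<Prod>i\<le>k. p i) * p (Suc k)) = 1" using Suc.prems by (simp add: prod.atMost_Suc)
  ultimately obtain x y where "z = x * y" "x ^ (\<Prod>i\<le>k. p i) = 1" "y ^ p (Suc k) = 1"
    using root_of_unity_split[OF _ pos] by metis
  then show ?case using Suc.IH[of x] roots[of y] mult[of x y] by simp
qed


definition unimodular_eigenvalues :: "(int \<Rightarrow> bool) measure \<Rightarrow> complex set" where
  "unimodular_eigenvalues \<nu> = {c. \<exists>f \<in> borel_measurable \<nu>.
      (\<forall>x. cmod (f x) = 1) \<and> (AE x in \<nu>. f (shift x) = c * f x)}"

lemma unimodular_eigenvalues_subset:
  assumes "prob_space \<nu>"
  shows "unimodular_eigenvalues \<nu> \<subseteq> discrete_spectrum \<nu>"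
proof
  fix c assume "c \<in> unimodular_eigenvalues \<nu>"
  then obtain f where f: "f \<in> borel_measurable \<nu>" "\<And>x. cmod (f x) = 1"
      "AE x in \<nu>. f (shift x) = c * f x"
    unfolding unimodular_eigenvalues_def by blast
  have "\<not> (AE x in \<nu>. f x = 0)"
  proof
    assume "AE x in \<nu>. f x = 0"
    then have "AE x in \<nu>. False" by eventually_elim (metis f(2) norm_zero zero_neq_one)
    then show False using prob_space.AE_False[OF assms] by simp
  qed
  moreover have "integrable \<nu> (\<lambda>x. (cmod (f x))\<^sup>2)"
    using f(2) finite_measure.integrable_const[OF prob_space.finite_measure[OF assms], of 1] by simp
  ultimately show "c \<in> discrete_spectrum \<nu>" unfolding discrete_spectrum_def using f by auto
qed

lemma unimodular_eigenvalues_mult: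
  assumes "a \<in> unimodular_eigenvalues \<nu>" "c \<in> unimodular_eigenvalues \<nu>"
  shows "a * c \<in> unimodular_eigenvalues \<nu>"
proof -
  obtain f where f: "f \<in> borel_measurable \<nu>" "\<And>x. cmod (f x) = 1"
      "AE x in \<nu>. f (shift x) = a * f x"
    using assms(1) unfolding unimodular_eigenvalues_def by blast
  obtain g where g: "g \<in> borel_measurable \<nu>" "\<And>x. cmod (g x) = 1"
      "AE x in \<nu>. g (shift x) = c * g x"
    using assms(2) unfolding unimodular_eigenvalues_def by blast
  have "AE x in \<nu>. f (shift x) * g (shift x) = (a * c) * (f x * g x)"
    using f(3) g(3) by eventually_elim (simp add: algebra_simps)
  moreover have "(\<lambda>x. f x * g x) \<in> borel_measurable \<nu>" using f(1) g(1) by measurable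
  ultimately show ?thesis unfolding unimodular_eigenvalues_def using f(2) g(2)
    by (intro CollectI bexI[of _ "\<lambda>x. f x * g x"] conjI) (auto simp: norm_mult)
qed

text \<open>If \<open>s\<close> is an integer-valued function with \<open>s y \<equiv> s (shift y) + 1 (mod p)\<close> almost
  everywhere, then \<open>w powi (- s y)\<close> is an eigenfunction for every \<open>p\<close>-th root of unity \<open>w\<close>.\<close>

lemma root_of_unity_eigenvalue_from_cocycle:
  fixes s :: "(int \<Rightarrow> bool) \<Rightarrow> int"
  assumes s: "s \<in> measurable \<nu> (count_space UNIV)"
    and cocycle: "AE y in \<nu>. int p dvd s y - s (shift y) - 1"
    and w: "w ^ p = 1" and p: "p > 0"
  shows "w \<in> unimodular_eigenvalues \<nu>"
proof -
  define f where "f y = w powi (- s y)" for y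
  have norm_w: "cmod w = 1" using power_eq_1_iff[OF w] p by simp
  have "f \<in> borel_measurable \<nu>"
    unfolding f_def by (rule measurable_compose[OF s]) simp
  moreover have "cmod (f y) = 1" for y unfolding f_def by (simp add: norm_power_int norm_w)
  moreover have "AE y in \<nu>. f (shift y) = w * f y"
    using cocycle
  proof eventually_elim
    case (elim y)
    have "w \<noteq> 0" using norm_w by auto
    have "w powi (- s (shift y)) = w powi (- s y + 1)"
      by (rule power_int_root_of_unity_cong[OF w]) (use elim in \<open>simp add: algebra_simps\<close>)
    then show ?case unfolding f_def using power_int_add[of w 1 "- s y"] \<open>w \<noteq> 0\<close> by simp
  qed
  ultimately show ?thesis unfolding unimodular_eigenvalues_def by blast
qed

text \<open>If the partial products \<open>\<Prod>(1 - x i)\<close> stay above a positive constant then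
  \<open>\<Sum>x i\<close> converges, because \<open>1 - x \<le> exp (- x)\<close>.\<close>

lemma summable_if_partial_products_bounded_below:
  fixes x :: "nat \<Rightarrow> real"
  assumes x: "\<And>i. 0 \<le> x i" "\<And>i. x i \<le> 1"
    and q: "q > 0" "\<And>K. q \<le> (\<Prod>i<K. 1 - x i)"
  shows "summable x"
proof (rule summableI_nonneg_bounded)
  fix K
  have "q \<le> (\<Prod>i<K. 1 - x i)" by (rule q(2))
  also have "\<dots> \<le> (\<Prod>i<K. exp (- x i))"
  proof (rule prod_mono)
    fix i show "0 \<le> 1 - x i \<and> 1 - x i \<le> exp (- x i)"
      using x(2)[of i] exp_ge_add_one_self[of "- x i"] by simp
  qed
  also have "\<dots> = exp (- (\<Sum>i<K. x i))" by (simp add: exp_sum sum_negf[symmetric])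
  finally have "ln q \<le> - (\<Sum>i<K. x i)" using q(1) by (metis exp_le_cancel_iff exp_ln)
  then show "(\<Sum>i<K. x i) \<le> - ln q" by simp
qed (use x in simp)

lemma missing_residues_eq_iff:
  assumes a: "a \<subseteq> {0..<c}"
  shows "missing_residues c y = a \<longleftrightarrow> (\<forall>r\<in>{0..<c}. r \<in> a \<longleftrightarrow> (\<forall>n. n mod c = r \<longrightarrow> \<not> y n))"
proof
  assume h: "\<forall>r\<in>{0..<c}. r \<in> a \<longleftrightarrow> (\<forall>n. n mod c = r \<longrightarrow> \<not> y n)"
  show "missing_residues c y = a"
  proof (rule set_eqI)
    fix r show "r \<in> missing_residues c y \<longleftrightarrow> r \<in> a"
      using h a unfolding missing_residues_def by (cases "r \<in> {0..<c}") auto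
  qed
qed (auto simp: missing_residues_def)

locale ergodic_shift =
  fixes \<nu> :: "(int \<Rightarrow> bool) measure"
  assumes sets_eq: "sets \<nu> = sets shiftM"
    and prob: "prob_space \<nu>"
    and invariant: "shift_invariant \<nu>"
    and ergodic: "shift_ergodic \<nu>"
begin

sublocale prob_space \<nu> by (rule prob)

lemma space_eq: "space \<nu> = UNIV"
  using sets_eq_imp_space_eq[OF sets_eq] by (simp add: shiftM_def space_PiM)

lemma coordinate_measurable[measurable]: "(\<lambda>y. y n) \<in> measurable \<nu> (count_space UNIV)"
proof -
  have "(\<lambda>y. y n) \<in> measurable shiftM (count_space UNIV)"
    unfolding shiftM_def by (rule measurable_component_singleton) simp
  then show ?thesis by (simp only: measurable_cong_sets[OF sets_eq refl])
qed

lemma coordinate_set[measurable]: "{y. y n} \<in> sets \<nu>"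
proof -
  have "{y \<in> space \<nu>. y n} \<in> sets \<nu>" by measurable
  then show ?thesis by (simp add: space_eq)
qed

text \<open>Every function of the missing residues is measurable, since they take finitely many values
  each described by countably many coordinates.\<close>

lemma missing_residues_measurable:
  assumes c: "c > 0" and g: "\<And>A. g A \<in> space N"
  shows "(\<lambda>y. g (missing_residues c y)) \<in> measurable \<nu> N"
proof -
  have "missing_residues c -` {a} \<inter> space \<nu> \<in> sets \<nu>" if a: "a \<subseteq> {0..<c}" for a
  proof -
    have "missing_residues c -` {a} \<inter> space \<nu>
        = {y \<in> space \<nu>. \<forall>r\<in>{0..<c}. r \<in> a \<longleftrightarrow> (\<forall>n. n mod c = r \<longrightarrow> \<not> y n)}"
    proof (rule set_eqI)
      fix y
      have "y \<in> missing_residues c -` {a} \<inter> space \<nu> \<longleftrightarrow> missing_residues c y = a"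
        by (simp add: space_eq)
      also have "\<dots> \<longleftrightarrow> (\<forall>r\<in>{0..<c}. r \<in> a \<longleftrightarrow> (\<forall>n. n mod c = r \<longrightarrow> \<not> y n))"
        by (rule missing_residues_eq_iff[OF a])
      finally show "y \<in> missing_residues c -` {a} \<inter> space \<nu> \<longleftrightarrow>
          y \<in> {y \<in> space \<nu>. \<forall>r\<in>{0..<c}. r \<in> a \<longleftrightarrow> (\<forall>n. n mod c = r \<longrightarrow> \<not> y n)}"
        by (simp add: space_eq)
    qed
    also have "\<dots> \<in> sets \<nu>" by measurable
    finally show ?thesis .
  qed
  then have "missing_residues c \<in> measurable \<nu> (count_space (Pow {0..<c}))"
    using missing_residues_subset
    by (subst measurable_count_space_eq_countable) (auto simp: countable_finite)
  then show ?thesis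
    by (rule measurable_compose) (use g in \<open>auto simp: measurable_count_space_eq1\<close>)
qed

lemma measure_shift_vimage:
  assumes A: "A \<in> sets \<nu>"
  shows "measure \<nu> (shift -` A) = measure \<nu> A"
proof -
  have "shift \<in> measurable \<nu> \<nu>" and "distr \<nu> \<nu> shift = \<nu>"
    using invariant unfolding shift_invariant_def by auto
  then have "measure \<nu> A = measure \<nu> (shift -` A \<inter> space \<nu>)"
    using measure_distr A by metis
  then show ?thesis by (simp add: space_eq)
qed

lemma invariant_function_AE_const:
  assumes g: "g \<in> measurable \<nu> (count_space UNIV)" and fin: "finite (range g)"
    and inv: "\<And>y. g (shift y) = g y"
  shows "\<exists>d. AE y in \<nu>. g y = d"
proof (rule ccontr)
  assume no_const: "\<nexists>d. AE y in \<nu>. g y = d"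
  have level_set: "g -` {d} \<in> sets \<nu>" for d
    using measurable_sets[OF g, of "{d}"] by (simp add: space_eq)
  have null: "measure \<nu> (g -` {d}) = 0" for d
  proof -
    have "shift -` (g -` {d}) \<inter> space \<nu> = g -` {d}" using inv by (auto simp: space_eq)
    then have "measure \<nu> (g -` {d}) = 0 \<or> measure \<nu> (g -` {d}) = 1"
      using ergodic level_set unfolding shift_ergodic_def by blast
    moreover have "measure \<nu> (g -` {d}) \<noteq> 1"
      using AE_prob_1[of "g -` {d}"] no_const by auto
    ultimately show ?thesis by blast
  qed
  have "space \<nu> = (\<Union>d\<in>range g. g -` {d})" by (auto simp: space_eq)
  then have "measure \<nu> (space \<nu>) \<le> (\<Sum>d\<in>range g. measure \<nu> (g -` {d}))"
    using finite_measure_subadditive_finite[OF fin] level_set by (metis image_subset_iff)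
  then show False using null by (simp add: prob_space)
qed

lemma coordinate_prob_eq: "measure \<nu> {y. y n} = measure \<nu> {y. y 0}"
proof (induction n rule: int_induct[where k = 0])
  case (step1 i)
  have "shift -` {y. y i} = {y. y (i + 1)}" unfolding shift_def by auto
  then show ?case using measure_shift_vimage[of "{y. y i}"] step1 by simp
next
  case (step2 i)
  have "shift -` {y. y (i - 1)} = {y. y i}" unfolding shift_def by auto
  then show ?case using measure_shift_vimage[of "{y. y (i - 1)}"] step2 by simp
qed simp

text \<open>An almost sure bound on the number of ones in a window of length \<open>N\<close> bounds the
  density \<open>\<nu>{y. y 0}\<close>, since by invariance every position carries a one with that probability.\<close>

lemma density_bound:
  assumes N: "N > 0" and bound: "AE y in \<nu>. real (card {n\<in>{0..<N}. y n}) \<le> B"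
  shows "real_of_int N * measure \<nu> {y. y 0} \<le> B"
proof -
  define count where "count y = (\<Sum>n\<in>{0..<N}. indicator {y. y n} y :: real)" for y
  have count_eq: "count y = real (card {n\<in>{0..<N}. y n})" for y
  proof -
    have "count y = (\<Sum>n\<in>{0..<N}. of_bool (y n))" unfolding count_def indicator_def by simp
    also have "\<dots> = real (card ({0..<N} \<inter> {n. y n}))" by (rule sum_of_bool_eq) simp_all
    finally show ?thesis by (simp only: Int_def mem_Collect_eq)
  qed
  have integrable: "integrable \<nu> count"
    unfolding count_def by (rule Bochner_Integration.integrable_sum) (simp add: integrable_indicator_iff emeasure_eq_measure)
  have "real_of_int N * measure \<nu> {y. y 0} = (\<Sum>n\<in>{0..<N}. measure \<nu> {y. y 0})"
    using N by simp
  also have "\<dots> = (\<Sum>n\<in>{0..<N}. measure \<nu> {y. y n})"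
    by (intro sum.cong refl) (metis coordinate_prob_eq)
  also have "\<dots> = (\<integral>y. count y \<partial>\<nu>)"
    unfolding count_def by (subst Bochner_Integration.integral_sum) (auto simp: space_eq emeasure_eq_measure)
  also have "\<dots> \<le> (\<integral>y. B \<partial>\<nu>)"
    using bound by (intro integral_mono_AE integrable) (simp_all add: count_eq)
  also have "\<dots> = B" by (simp add: prob_space)
  finally show ?thesis .
qed

lemma AE_zero_imp_dirac:
  assumes "AE y in \<nu>. y = (\<lambda>_. False)"
  shows "\<nu> = return shiftM (\<lambda>_. False)"
proof (rule measure_eqI)
  show "sets \<nu> = sets (return shiftM (\<lambda>_. False))" using sets_eq by simp
  fix A assume A: "A \<in> sets \<nu>"
  show "emeasure \<nu> A = emeasure (return shiftM (\<lambda>_. False)) A"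
  proof (cases "(\<lambda>_. False) \<in> A")
    case True
    have "AE y in \<nu>. y \<in> A" using assms by eventually_elim (use True in simp)
    then show ?thesis using True A sets_eq emeasure_eq_1_AE by simp
  next
    case False
    have "AE y in \<nu>. y \<notin> A" using assms by eventually_elim (use False in simp)
    then have "emeasure \<nu> {y\<in>space \<nu>. y \<in> A} = 0" by (rule emeasure_eq_0_AE)
    then show ?thesis using False A sets_eq by (simp add: space_eq)
  qed
qed

lemma prob_coordinate_pos:
  assumes not_dirac: "\<nu> \<noteq> return shiftM (\<lambda>_. False)"
  shows "measure \<nu> {y. y 0} > 0"
proof (rule ccontr)
  assume "\<not> measure \<nu> {y. y 0} > 0"
  then have "measure \<nu> {y. y n} = 0" for n
    using coordinate_prob_eq[of n] measure_nonneg[of \<nu> "{y. y 0}"] by simp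
  then have "AE y in \<nu>. \<not> y n" for n
    by (subst AE_iff_measurable[of "{y. y n}"]) (auto simp: space_eq emeasure_eq_measure)
  then have "AE y in \<nu>. \<forall>n. \<not> y n" by (simp add: AE_all_countable)
  then have "AE y in \<nu>. y = (\<lambda>_. False)" by eventually_elim auto
  then show False using AE_zero_imp_dirac not_dirac by blast
qed

end


locale B_free_ergodic = ergodic_shift +
  fixes b :: "nat \<Rightarrow> nat"
  assumes b_pos: "\<And>i. b i > 0"
    and b_coprime: "\<And>i j. i \<noteq> j \<Longrightarrow> coprime (b i) (b j)"
    and supported: "emeasure \<nu> (X_eta b) = 1"
    and not_dirac: "\<nu> \<noteq> return shiftM (\<lambda>_. False)"
begin

lemma AE_X_eta: "AE y in \<nu>. y \<in> X_eta b"
proof -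
  have "X_eta b \<in> sets \<nu>" using supported emeasure_notin_sets by fastforce
  then show ?thesis using supported by (simp add: AE_in_set_eq_1 emeasure_eq_measure)
qed

definition residue_period :: "nat \<Rightarrow> (int \<Rightarrow> bool) \<Rightarrow> nat" where
  "residue_period i y = period (int (b i)) (missing_residues (int (b i)) y)"

lemma b_int_pos: "int (b i) > 0"
  using b_pos[of i] by simp

lemma residue_period_shift: "residue_period i (shift y) = residue_period i y"
proof -
  let ?c = "int (b i)"
  have "period ?c (missing_residues ?c y) = period ?c (rot ?c 1 (missing_residues ?c (shift y)))"
    using missing_residues_shift[OF b_int_pos, of i y] by (rule arg_cong)
  also have "\<dots> = period ?c (missing_residues ?c (shift y))"
    by (rule period_rot[OF missing_residues_subset b_int_pos])
  finally show ?thesis unfolding residue_period_def by (rule sym)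
qed

lemma residue_period_le: "residue_period i y \<le> b i"
proof -
  have "int (residue_period i y) dvd int (b i)"
    unfolding residue_period_def by (rule period_dvd[OF missing_residues_subset b_int_pos])
  then show ?thesis using b_pos[of i] by (simp add: dvd_imp_le)
qed

text \<open>By ergodicity the period of the missing residues modulo \<open>b i\<close> is almost surely constant;
  this constant is the divisor \<open>b' i\<close> of \<open>b i\<close> in the theorem.\<close>

definition essential_period :: "nat \<Rightarrow> nat" where
  "essential_period i = (SOME d. AE y in \<nu>. residue_period i y = d)"

lemma AE_residue_period: "AE y in \<nu>. residue_period i y = essential_period i"
proof -
  have "\<exists>d. AE y in \<nu>. residue_period i y = d"
  proof (rule invariant_function_AE_const)
    show "residue_period i \<in> measurable \<nu> (count_space UNIV)"
      unfolding residue_period_def by (rule missing_residues_measurable[OF b_int_pos]) simp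
    have "range (residue_period i) \<subseteq> {..b i}" using residue_period_le by auto
    then show "finite (range (residue_period i))" by (rule finite_subset) simp
  qed (rule residue_period_shift)
  then show ?thesis unfolding essential_period_def by (rule someI_ex)
qed

lemma AE_witness:
  assumes "AE y in \<nu>. P y"
  shows "\<exists>y. P y"
proof (rule ccontr)
  assume "\<nexists>y. P y"
  then have "AE y in \<nu>. False" using assms by simp
  then show False by simp
qed

lemma essential_period_dvd: "essential_period i dvd b i"
proof -
  obtain y where y: "residue_period i y = essential_period i"
    using AE_witness[OF AE_residue_period] by blast
  have "int (residue_period i y) dvd int (b i)"
    unfolding residue_period_def by (rule period_dvd[OF missing_residues_subset b_int_pos])
  then show ?thesis using y by simp
qed

lemma essential_period_gt_1: "1 < essential_period i"
proof -
  have "essential_period i \<noteq> 1"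
  proof
    assume p1: "essential_period i = 1"
    have "AE y in \<nu>. y = (\<lambda>_. False)"
      using AE_X_eta AE_residue_period[of i]
    proof eventually_elim
      case (elim y)
      have "missing_residues (int (b i)) y = {0..<int (b i)}"
      proof (rule period_one_full[OF missing_residues_subset b_int_pos])
        show "missing_residues (int (b i)) y \<noteq> {}" by (rule missing_residues_nonempty[OF elim(1) b_pos])
        show "period (int (b i)) (missing_residues (int (b i)) y) = 1"
          using elim(2) p1 unfolding residue_period_def by simp
      qed
      then show ?case by (rule missing_residues_all[OF _ b_int_pos])
    qed
    then show False using AE_zero_imp_dirac not_dirac by blast
  qed
  moreover obtain y where y: "residue_period i y = essential_period i"
    using AE_witness[OF AE_residue_period] by blast
  have "residue_period i y > 0"
    unfolding residue_period_def by (rule period_pos[OF missing_residues_subset b_int_pos])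
  ultimately show ?thesis using y by simp
qed

text \<open>The position of the missing residues within their rotation orbit moves by one
  under the shift, which turns every \<open>essential_period i\<close>-th root of unity into an
  eigenvalue.\<close>

lemma root_of_unity_eigenvalue:
  assumes w: "w ^ essential_period i = 1"
  shows "w \<in> unimodular_eigenvalues \<nu>"
proof -
  define c where "c = int (b i)"
  define s where "s y = orbit_index c (missing_residues c y)" for y
  have c: "c > 0" unfolding c_def by (rule b_int_pos)
  have "s \<in> measurable \<nu> (count_space UNIV)"
    unfolding s_def by (rule missing_residues_measurable[OF c]) simp
  moreover have "AE y in \<nu>. int (essential_period i) dvd s y - s (shift y) - 1"
    using AE_residue_period[of i]
  proof eventually_elim
    case (elim y)
    define A where "A = missing_residues c (shift y)"
    have "missing_residues c y = rot c 1 A" unfolding A_def by (rule missing_residues_shift[OF c])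
    moreover have "period c A = essential_period i"
      using elim residue_period_shift unfolding residue_period_def A_def c_def by simp
    ultimately show ?case
      using orbit_index_rot[OF missing_residues_subset c, of "shift y"]
      unfolding s_def A_def by simp
  qed
  moreover have "essential_period i > 0" using essential_period_gt_1[of i] by simp
  ultimately show ?thesis by (rule root_of_unity_eigenvalue_from_cocycle[OF _ _ w])
qed

text \<open>The density of ones is at most \<open>\<Prod>i<K. 1 - 1/b' i\<close>, by averaging the pointwise count.\<close>

lemma density_le_product: "measure \<nu> {y. y 0} \<le> (\<Prod>i<K. 1 - 1 / real (essential_period i))"
proof -
  define N where "N = (\<Prod>i<K. int (b i))"
  have N: "N > 0" unfolding N_def using b_pos by (simp add: prod_pos)
  have "AE y in \<nu>. \<forall>i\<in>{..<K}. residue_period i y = essential_period i"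
    by (rule eventually_ball_finite) (use AE_residue_period in auto)
  then have "AE y in \<nu>. real (card {n\<in>{0..<N}. y n})
      \<le> real_of_int N * (\<Prod>i<K. 1 - 1 / real (essential_period i))"
    using AE_X_eta
  proof eventually_elim
    case (elim y)
    then show ?case
      using card_ones_le[OF elim(2) b_pos b_coprime, of K] unfolding N_def residue_period_def by simp
  qed
  then have "real_of_int N * measure \<nu> {y. y 0}
      \<le> real_of_int N * (\<Prod>i<K. 1 - 1 / real (essential_period i))"
    by (rule density_bound[OF N])
  then show ?thesis using N by simp
qed

lemma essential_period_summable: "summable (\<lambda>i. 1 / real (essential_period i))"
proof (rule summable_if_partial_products_bounded_below)
  show "1 / real (essential_period i) \<le> 1" for i
    using essential_period_gt_1[of i] by (simp add: divide_le_eq)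
qed (use prob_coordinate_pos[OF not_dirac] density_le_product in auto)

lemma essential_period_coprime: "i \<noteq> j \<Longrightarrow> coprime (essential_period i) (essential_period j)"
  using coprime_divisors[OF essential_period_dvd essential_period_dvd b_coprime] by blast

lemma product_roots_in_discrete_spectrum:
  assumes "z ^ (\<Prod>i\<le>k. essential_period i) = 1"
  shows "z \<in> discrete_spectrum \<nu>"
proof -
  have "z \<in> unimodular_eigenvalues \<nu>"
  proof (rule roots_of_coprime_product[where p = essential_period, OF _ _ _ _ assms])
    show "essential_period i > 0" for i using essential_period_gt_1[of i] by simp
  qed (fact unimodular_eigenvalues_mult root_of_unity_eigenvalue essential_period_coprime)+
  then show ?thesis using unimodular_eigenvalues_subset[OF prob] by blast
qed

end

theorem mainTheorem11:
  fixes b :: "nat \<Rightarrow> nat" and \<nu> :: "(int \<Rightarrow> bool) measure"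
  assumes b_ge2: "\<And>i. b i \<ge> 2"
    and b_coprime: "\<And>i j. i \<noteq> j \<Longrightarrow> coprime (b i) (b j)"
    and b_summable: "summable (\<lambda>i. 1 / real (b i))"
    and \<nu>_sets: "sets \<nu> = sets shiftM"
    and \<nu>_prob: "prob_space \<nu>"
    and \<nu>_supp: "emeasure \<nu> (X_eta b) = 1"
    and \<nu>_inv: "shift_invariant \<nu>"
    and \<nu>_erg: "shift_ergodic \<nu>"
    and \<nu>_not_dirac: "\<nu> \<noteq> return shiftM (\<lambda>_. False)"
  shows "\<exists>b' :: nat \<Rightarrow> nat. (\<forall>k. 1 < b' k \<and> b' k dvd b k) \<and>
           summable (\<lambda>k. 1 / real (b' k)) \<and>
           (\<forall>k. \<forall>z::complex. z ^ (\<Prod>i\<le>k. b' i) = 1 \<longrightarrow> z \<in> discrete_spectrum \<nu>)"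
proof -
  have b_pos: "b i > 0" for i using b_ge2[of i] by simp
  interpret B_free_ergodic \<nu> b
    by (intro B_free_ergodic.intro ergodic_shift.intro B_free_ergodic_axioms.intro)
      (fact \<nu>_sets \<nu>_prob \<nu>_inv \<nu>_erg b_pos b_coprime \<nu>_supp \<nu>_not_dirac)+
  show ?thesis
  proof (intro exI[of _ essential_period] conjI allI impI)
    show "1 < essential_period k" "essential_period k dvd b k" for k
      by (fact essential_period_gt_1 essential_period_dvd)+
    show "summable (\<lambda>k. 1 / real (essential_period k))" by (fact essential_period_summable)
    show "z \<in> discrete_spectrum \<nu>" if "z ^ (\<Prod>i\<le>k. essential_period i) = 1" for k z
      using that by (rule product_roots_in_discrete_spectrum)
  qed
qed

end
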